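(* Let $(\theta^k)_k$ be a sequence of Borel probability measures on $\mathbb{R}_+$, absolutely continuous with respect to Lebesgue measure, with densities $f_{\theta^k}=\sum_{m=1}^\infty \xi^k_m \mathbf{1}_{[m-1,m)}$ where $\xi^k=(\xi^k_1,\xi^k_2,\dots)$ is a probability distribution on the positive integers. Then $(\theta^k)_k$ satisfies the long-term condition (LTC) if and only if $\sum_{m=1}^\infty|\xi^k_{m+1}-\xi^k_m|\to0$ as $k\to\infty$.
   Context: For a Borel probability measure $\theta$ on $\mathbb{R}_+$ and $s\geq0$, $TV_s(\theta)=\sup_{Q\in\mathcal{B}(\mathbb{R}_+)}|\theta(Q)-\theta(Q+s)|$. A sequence $(\theta^k)_{k\ge1}$ satisfies the LTC if for every $S>0$, $\sup_{0\leq s\leq S}TV_s(\theta^k)\to0$ as $k\to\infty$. *)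

theory Defs
  imports "HOL-Probability.Probability"
begin

text \<open>TV_s(theta) = sup over Borel Q subset of R_+ of |theta(Q) - theta(Q+s)|.
  Measures on R_+ are represented as measures on the real line (Borel sets) supported on [0,oo).\<close>
definition TV :: "real measure \<Rightarrow> real \<Rightarrow> real" where
  "TV \<theta> s = (SUP Q \<in> {Q. Q \<in> sets borel \<and> Q \<subseteq> {0..}}.
       \<bar>measure \<theta> Q - measure \<theta> ((\<lambda>x. x + s) ` Q)\<bar>)"

definition LTC :: "(nat \<Rightarrow> real measure) \<Rightarrow> bool" where
  "LTC \<theta> \<longleftrightarrow> (\<forall>S>0. (\<lambda>k. SUP s \<in> {0..S}. TV (\<theta> k) s) \<longlonglongrightarrow> 0)"

end

theory Submission
  imports Defs
begin

text \<open>Write \<open>f\<close> for the density, equal to \<open>c m\<close> on \<open>[m, m + 1)\<close>, and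
  \<open>V = \<Sum>m. \<bar>c (m + 1) - c m\<bar>\<close>. For \<open>Q \<subseteq> [0, \<infinity>)\<close> we have
  \<open>\<bar>\<theta> Q - \<theta> (Q + s)\<bar> \<le> \<integral>\<^sub>Q \<bar>f x - f (x + s)\<bar> dx\<close>, and \<open>\<bar>f x - f (x + s)\<bar>\<close> is at most the
  sum of the jumps of \<open>f\<close> at the integers in \<open>(x, x + s]\<close>. Each jump is therefore counted on a
  set of length \<open>s\<close>, so \<open>TV\<^sub>s(\<theta>) \<le> s V\<close>. Conversely, if \<open>Q\<close> is the union of the intervals
  \<open>[m, m + 1)\<close> with \<open>c (m + 1) < c m\<close>, then \<open>\<theta> Q - \<theta> (Q + 1)\<close> is the total decrease
  \<open>\<Sum>m. max 0 (c m - c (m + 1)) = (V + c 0) / 2\<close>, so \<open>V / 2 \<le> TV\<^sub>1(\<theta>)\<close>.\<close>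

lemma sets_borel_translation:
  assumes "Q \<in> sets borel"
  shows "(\<lambda>x::real. x + s) ` Q \<in> sets borel"
proof -
  have "(\<lambda>x. x + s) ` Q = (\<lambda>x. x - s) -` Q \<inter> space borel"
    by (auto simp: image_iff) (metis diff_add_cancel)
  also have "\<dots> \<in> sets borel"
    using assms by measurable
  finally show ?thesis .
qed

lemma emeasure_density_translation:
  fixes f :: "real \<Rightarrow> ennreal"
  assumes [measurable]: "f \<in> borel_measurable borel" "Q \<in> sets borel"
  shows "emeasure (density lborel f) ((\<lambda>x. x + s) ` Q) = (\<integral>\<^sup>+x\<in>Q. f (x + s) \<partial>lborel)"
proof -
  have [measurable]: "(\<lambda>x. x + s) ` Q \<in> sets borel"
    by (rule sets_borel_translation) simp
  have "emeasure (density lborel f) ((\<lambda>x. x + s) ` Q) = (\<integral>\<^sup>+x\<in>(\<lambda>x. x + s) ` Q. f x \<partial>lborel)"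
    by (simp add: emeasure_density)
  also have "\<dots> = (\<integral>\<^sup>+x. f (s + x) * indicator ((\<lambda>x. x + s) ` Q) (s + x) \<partial>lborel)"
    using nn_integral_real_affine[of "\<lambda>x. f x * indicator ((\<lambda>x. x + s) ` Q) x" 1 s] by simp
  also have "\<dots> = (\<integral>\<^sup>+x\<in>Q. f (x + s) \<partial>lborel)"
    by (auto intro!: nn_integral_cong simp: indicator_def add.commute)
  finally show ?thesis .
qed

lemma set_nn_integral_le_add_abs_diff:
  fixes g h :: "'a \<Rightarrow> real"
  assumes [measurable]: "g \<in> borel_measurable M" "h \<in> borel_measurable M" "A \<in> sets M"
    and "\<And>x. 0 \<le> h x"
  shows "(\<integral>\<^sup>+x\<in>A. g x \<partial>M) \<le> (\<integral>\<^sup>+x\<in>A. h x \<partial>M) + (\<integral>\<^sup>+x\<in>A. \<bar>g x - h x\<bar> \<partial>M)"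
proof -
  have "ennreal (g x) \<le> ennreal (h x) + ennreal \<bar>g x - h x\<bar>" for x
    using assms(4)[of x] by (simp add: ennreal_plus[symmetric] del: ennreal_plus)
  then have "(\<integral>\<^sup>+x\<in>A. g x \<partial>M) \<le>
             (\<integral>\<^sup>+x. ennreal (h x) * indicator A x + ennreal \<bar>g x - h x\<bar> * indicator A x \<partial>M)"
    by (intro nn_integral_mono) (auto simp: indicator_def)
  also have "\<dots> = (\<integral>\<^sup>+x\<in>A. h x \<partial>M) + (\<integral>\<^sup>+x\<in>A. \<bar>g x - h x\<bar> \<partial>M)"
    by (rule nn_integral_add) auto
  finally show ?thesis .
qed

lemma emeasure_density_translation_le:
  fixes f :: "real \<Rightarrow> real"
  assumes [measurable]: "f \<in> borel_measurable borel" "Q \<in> sets borel" and "\<And>x. 0 \<le> f x"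
  shows "emeasure (density lborel (\<lambda>x. ennreal (f x))) Q \<le>
           emeasure (density lborel (\<lambda>x. ennreal (f x))) ((\<lambda>x. x + s) ` Q) + (\<integral>\<^sup>+x\<in>Q. \<bar>f x - f (x + s)\<bar> \<partial>lborel)"
    and "emeasure (density lborel (\<lambda>x. ennreal (f x))) ((\<lambda>x. x + s) ` Q) \<le>
           emeasure (density lborel (\<lambda>x. ennreal (f x))) Q + (\<integral>\<^sup>+x\<in>Q. \<bar>f x - f (x + s)\<bar> \<partial>lborel)"
  using set_nn_integral_le_add_abs_diff[of f lborel "\<lambda>x. f (x + s)" Q]
    set_nn_integral_le_add_abs_diff[of "\<lambda>x. f (x + s)" lborel f Q]
  by (simp_all add: assms emeasure_density emeasure_density_translation abs_minus_commute)

lemma (in prob_space) abs_prob_diff_le_1: "\<bar>prob A - prob B\<bar> \<le> 1"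
  using prob_le_1[of A] prob_le_1[of B] measure_nonneg[of M A] measure_nonneg[of M B] by linarith

lemma bdd_above_TV_image:
  assumes "prob_space \<theta>"
  shows "bdd_above ((\<lambda>Q. \<bar>measure \<theta> Q - measure \<theta> ((\<lambda>x. x + s) ` Q)\<bar>) ` A)"
proof -
  interpret prob_space \<theta> by fact
  show ?thesis
    by (rule bdd_aboveI[of _ 1]) (auto simp: abs_prob_diff_le_1)
qed

lemma abs_measure_translation_diff_le_TV:
  assumes "prob_space \<theta>" "Q \<in> sets borel" "Q \<subseteq> {0..}"
  shows "\<bar>measure \<theta> Q - measure \<theta> ((\<lambda>x. x + s) ` Q)\<bar> \<le> TV \<theta> s"
  unfolding TV_def using assms by (intro cSUP_upper bdd_above_TV_image) auto

lemma TV_nonneg: "prob_space \<theta> \<Longrightarrow> 0 \<le> TV \<theta> s"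
  using abs_measure_translation_diff_le_TV[of \<theta> "{}" s] by simp

lemma TV_le_1:
  assumes "prob_space \<theta>"
  shows "TV \<theta> s \<le> 1"
proof -
  interpret prob_space \<theta> by fact
  show ?thesis
    unfolding TV_def by (rule cSUP_least) (auto simp: abs_prob_diff_le_1)
qed

lemma tendsto_zero_if_LTC:
  fixes \<theta> :: "nat \<Rightarrow> real measure" and D :: "nat \<Rightarrow> real"
  assumes "LTC \<theta>" and TV_le_1: "\<And>k s. TV (\<theta> k) s \<le> 1"
    and lower: "\<And>k. D k \<le> C * TV (\<theta> k) 1" and "0 \<le> C" and D_nonneg: "\<And>k. 0 \<le> D k"
  shows "D \<longlonglongrightarrow> 0"
proof (rule tendsto_sandwich[OF _ _ tendsto_const])
  have "D k \<le> C * (SUP s\<in>{0..1}. TV (\<theta> k) s)" for k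
  proof -
    have "TV (\<theta> k) 1 \<le> (SUP s\<in>{0..1}. TV (\<theta> k) s)"
      using TV_le_1 by (intro cSUP_upper bdd_aboveI) auto
    then show ?thesis
      using lower[of k] mult_left_mono[OF _ \<open>0 \<le> C\<close>] by (meson order.trans)
  qed
  then show "\<forall>\<^sub>F k in sequentially. D k \<le> C * (SUP s\<in>{0..1}. TV (\<theta> k) s)"
    by simp
  have "(\<lambda>k. SUP s\<in>{0..1}. TV (\<theta> k) s) \<longlonglongrightarrow> 0"
    using \<open>LTC \<theta>\<close> unfolding LTC_def by simp
  from tendsto_mult_left[OF this, of C]
  show "(\<lambda>k. C * (SUP s\<in>{0..1}. TV (\<theta> k) s)) \<longlonglongrightarrow> 0"
    by simp
qed (simp add: D_nonneg)

lemma LTC_if_tendsto_zero: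
  fixes \<theta> :: "nat \<Rightarrow> real measure" and D :: "nat \<Rightarrow> real"
  assumes "D \<longlonglongrightarrow> 0" and TV_nonneg: "\<And>k s. 0 \<le> TV (\<theta> k) s"
    and upper: "\<And>k s. 0 \<le> s \<Longrightarrow> TV (\<theta> k) s \<le> s * D k" and D_nonneg: "\<And>k. 0 \<le> D k"
  shows "LTC \<theta>"
  unfolding LTC_def
proof (intro allI impI)
  fix S :: real assume "S > 0"
  have TV_le: "TV (\<theta> k) s \<le> S * D k" if "s \<in> {0..S}" for k s
  proof -
    have "TV (\<theta> k) s \<le> s * D k" "s * D k \<le> S * D k"
      using that upper D_nonneg by (auto intro: mult_right_mono)
    then show ?thesis
      by linarith
  qed
  then have bdd: "bdd_above ((\<lambda>s. TV (\<theta> k) s) ` {0..S})" for k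
    by (intro bdd_aboveI[of _ "S * D k"]) auto
  show "(\<lambda>k. SUP s\<in>{0..S}. TV (\<theta> k) s) \<longlonglongrightarrow> 0"
  proof (rule tendsto_sandwich[OF _ _ tendsto_const])
    have "0 \<le> (SUP s\<in>{0..S}. TV (\<theta> k) s)" for k
      using \<open>S > 0\<close> TV_nonneg cSUP_upper2[OF bdd, of 0] by auto
    then show "\<forall>\<^sub>F k in sequentially. 0 \<le> (SUP s\<in>{0..S}. TV (\<theta> k) s)"
      by simp
    have "(SUP s\<in>{0..S}. TV (\<theta> k) s) \<le> S * D k" for k
      using \<open>S > 0\<close> TV_le by (intro cSUP_least) auto
    then show "\<forall>\<^sub>F k in sequentially. (SUP s\<in>{0..S}. TV (\<theta> k) s) \<le> S * D k"
      by simp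
    show "(\<lambda>k. S * D k) \<longlonglongrightarrow> 0"
      using tendsto_mult_left[OF \<open>D \<longlonglongrightarrow> 0\<close>, of S] by simp
  qed
qed

lemma LTC_iff_tendsto_zero:
  fixes \<theta> :: "nat \<Rightarrow> real measure" and D :: "nat \<Rightarrow> real"
  assumes "\<And>k s. 0 \<le> TV (\<theta> k) s" "\<And>k s. TV (\<theta> k) s \<le> 1"
    and "\<And>k s. 0 \<le> s \<Longrightarrow> TV (\<theta> k) s \<le> s * D k"
    and "\<And>k. D k \<le> C * TV (\<theta> k) 1" "0 \<le> C"
  shows "LTC \<theta> \<longleftrightarrow> D \<longlonglongrightarrow> 0"
proof -
  have "0 \<le> D k" for k
    using assms(1)[of k 1] assms(3)[of 1 k] by simp
  then show ?thesis
    using assms tendsto_zero_if_LTC[of \<theta> D C] LTC_if_tendsto_zero[of D \<theta>] by blast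
qed

definition seq_variation :: "(nat \<Rightarrow> real) \<Rightarrow> real" where
  "seq_variation c = (\<Sum>m. \<bar>c (Suc m) - c m\<bar>)"

lemma summable_abs_diff_Suc:
  fixes c :: "nat \<Rightarrow> real"
  assumes "summable (\<lambda>m. \<bar>c m\<bar>)"
  shows "summable (\<lambda>m. \<bar>c (Suc m) - c m\<bar>)"
proof (rule summable_comparison_test')
  show "summable (\<lambda>m. \<bar>c (Suc m)\<bar> + \<bar>c m\<bar>)"
    using assms summable_Suc_iff[of "\<lambda>m. \<bar>c m\<bar>"] by (intro summable_add) simp_all
qed simp

lemma seq_variation_nonneg: "summable (\<lambda>m. \<bar>c m\<bar>) \<Longrightarrow> 0 \<le> seq_variation c"
  unfolding seq_variation_def by (intro suminf_nonneg summable_abs_diff_Suc) auto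

lemma suminf_ennreal_abs_diff_Suc:
  "summable (\<lambda>m. \<bar>c m\<bar>) \<Longrightarrow> (\<Sum>m. ennreal \<bar>c (Suc m) - c m\<bar>) = ennreal (seq_variation c)"
  unfolding seq_variation_def by (intro suminf_ennreal2 summable_abs_diff_Suc) auto

text \<open>The differences \<open>c (m + 1) - c m\<close> sum to \<open>-c 0\<close>, since a summable sequence tends to \<open>0\<close>.\<close>
lemma seq_variation_eq_decrease:
  fixes c :: "nat \<Rightarrow> real"
  assumes "summable (\<lambda>m. \<bar>c m\<bar>)"
  shows "seq_variation c = 2 * (\<Sum>m. max 0 (c m - c (Suc m))) - c 0"
proof -
  have var: "summable (\<lambda>m. \<bar>c (Suc m) - c m\<bar>)"
    using assms by (rule summable_abs_diff_Suc)
  have decrease: "summable (\<lambda>m. max 0 (c m - c (Suc m)))"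
    by (rule summable_comparison_test'[OF var]) auto
  have "c \<longlonglongrightarrow> 0"
    using assms by (simp add: summable_LIMSEQ_zero summable_rabs_cancel)
  then have "(\<lambda>m. c m - c (Suc m)) sums c 0"
    using telescope_sums' by fastforce
  moreover have "\<bar>c (Suc m) - c m\<bar> = 2 * max 0 (c m - c (Suc m)) - (c m - c (Suc m))" for m
    by (simp add: max_def)
  ultimately have "(\<lambda>m. \<bar>c (Suc m) - c m\<bar>) sums (2 * (\<Sum>m. max 0 (c m - c (Suc m))) - c 0)"
    using decrease by (simp add: sums_diff sums_mult summable_sums)
  then show ?thesis
    unfolding seq_variation_def by (rule sums_unique[symmetric])
qed

definition step_fun :: "(nat \<Rightarrow> real) \<Rightarrow> real \<Rightarrow> real" where
  "step_fun c x = (\<Sum>m. c m * indicator {real m..<real (Suc m)} x)"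

definition step_density :: "(nat \<Rightarrow> real) \<Rightarrow> real measure" where
  "step_density c = density lborel (\<lambda>x. ennreal (step_fun c x))"

lemma mem_unit_interval_iff: "x \<in> {real m..<real (Suc m)} \<longleftrightarrow> 0 \<le> x \<and> m = nat \<lfloor>x\<rfloor>"
proof -
  have "x \<in> {real m..<real (Suc m)} \<longleftrightarrow> 0 \<le> x \<and> \<lfloor>x\<rfloor> = int m"
    by (auto simp: floor_eq_iff)
  then show ?thesis by linarith
qed

lemma step_fun_sums:
  fixes c :: "nat \<Rightarrow> real"
  shows "(\<lambda>m. c m * indicator {real m..<real (Suc m)} x) sums (if 0 \<le> x then c (nat \<lfloor>x\<rfloor>) else 0)"
proof -
  have "c m * indicator {real m..<real (Suc m)} x =
        (if m = nat \<lfloor>x\<rfloor> then (if 0 \<le> x then c m else 0) else 0)" for m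
    unfolding indicator_def mem_unit_interval_iff by simp
  then show ?thesis
    using sums_single[of "nat \<lfloor>x\<rfloor>" "\<lambda>m. if 0 \<le> x then c m else 0"] by simp
qed

lemma step_fun_eq: "step_fun c x = (if 0 \<le> x then c (nat \<lfloor>x\<rfloor>) else 0)"
  unfolding step_fun_def using step_fun_sums by (rule sums_unique[symmetric])

lemma borel_measurable_step_fun[measurable]: "step_fun c \<in> borel_measurable borel"
  unfolding step_fun_def by measurable

lemma step_fun_nonneg: "(\<And>m. 0 \<le> c m) \<Longrightarrow> 0 \<le> step_fun c x"
  by (simp add: step_fun_eq)

lemma ennreal_step_fun:
  assumes "\<And>m. 0 \<le> c m"
  shows "ennreal (step_fun c x) = (\<Sum>m. ennreal (c m) * indicator {real m..<real (Suc m)} x)"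
proof -
  have "(\<Sum>m. ennreal (c m * indicator {real m..<real (Suc m)} x)) = ennreal (step_fun c x)"
    unfolding step_fun_def
    by (rule suminf_ennreal2) (use assms sums_summable[OF step_fun_sums] in auto)
  then show ?thesis by (simp add: assms ennreal_mult' ennreal_indicator)
qed

lemma sets_step_density[simp]: "sets (step_density c) = sets borel"
  by (simp add: step_density_def)

lemma space_step_density[simp]: "space (step_density c) = UNIV"
  by (simp add: step_density_def)

lemma emeasure_step_density_unit_interval:
  "emeasure (step_density c) {real m..<real (Suc m)} = ennreal (c m)"
proof -
  have "emeasure (step_density c) {real m..<real (Suc m)} =
        (\<integral>\<^sup>+x. ennreal (c m) * indicator {real m..<real (Suc m)} x \<partial>lborel)"
    unfolding step_density_def
    by (subst emeasure_density)
       (auto intro!: nn_integral_cong simp: step_fun_eq indicator_def mem_unit_interval_iff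
         simp del: atLeastLessThan_iff of_nat_Suc)
  then show ?thesis by (simp add: nn_integral_cmult_indicator)
qed

lemma emeasure_step_density_UNIV:
  assumes "\<And>m. 0 \<le> c m" and "summable c"
  shows "emeasure (step_density c) UNIV = ennreal (\<Sum>m. c m)"
proof -
  have "emeasure (step_density c) UNIV =
        (\<integral>\<^sup>+x. (\<Sum>m. ennreal (c m) * indicator {real m..<real (Suc m)} x) \<partial>lborel)"
    unfolding step_density_def by (simp add: emeasure_density ennreal_step_fun assms)
  also have "\<dots> = (\<Sum>m. ennreal (c m))"
    by (simp add: nn_integral_suminf nn_integral_cmult_indicator)
  also have "\<dots> = ennreal (\<Sum>m. c m)"
    using assms by (rule suminf_ennreal2)
  finally show ?thesis .
qed

lemma prob_space_step_density:
  assumes "\<And>m. 0 \<le> c m" and "c sums 1"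
  shows "prob_space (step_density c)"
  using assms by (intro prob_spaceI) (simp add: emeasure_step_density_UNIV sums_iff)

lemma measure_step_density_UN_unit_intervals:
  assumes "\<And>m. 0 \<le> c m" and "finite S"
  shows "measure (step_density c) (\<Union>m\<in>S. {real m..<real (Suc m)}) = (\<Sum>m\<in>S. c m)"
proof -
  have "disjoint_family_on (\<lambda>m. {real m..<real (Suc m)}) S"
    by (auto simp: disjoint_family_on_def mem_unit_interval_iff)
  then have "measure (step_density c) (\<Union>m\<in>S. {real m..<real (Suc m)}) =
             (\<Sum>m\<in>S. measure (step_density c) {real m..<real (Suc m)})"
    using assms(2) by (intro measure_finite_Union)
      (auto simp: emeasure_step_density_unit_interval simp del: of_nat_Suc)
  then show ?thesis
    by (simp add: measure_def emeasure_step_density_unit_interval assms(1) del: of_nat_Suc)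
qed

text \<open>Between \<open>x\<close> and \<open>x + s\<close> the step function jumps exactly at the integers \<open>m + 1\<close> with
  \<open>x \<in> [m + 1 - s, m + 1)\<close>.\<close>
lemma step_fun_translation_jump_le:
  assumes "0 \<le> x" "0 \<le> s"
  shows "ennreal \<bar>step_fun c x - step_fun c (x + s)\<bar> \<le>
           (\<Sum>m. ennreal \<bar>c (Suc m) - c m\<bar> * indicator {real (Suc m) - s..<real (Suc m)} x)"
proof -
  define n p where "n = nat \<lfloor>x\<rfloor>" and "p = nat \<lfloor>x + s\<rfloor>"
  have "n \<le> p"
    unfolding n_def p_def using assms by (intro nat_mono floor_mono) simp
  have jump: "x \<in> {real (Suc m) - s..<real (Suc m)}" if "m \<in> {n..<p}" for m
    using that assms unfolding n_def p_def by (simp add: le_nat_iff le_floor_iff) linarith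
  have "\<bar>step_fun c x - step_fun c (x + s)\<bar> = \<bar>\<Sum>m = n..<p. c (Suc m) - c m\<bar>"
    using sum_Suc_diff'[OF \<open>n \<le> p\<close>, of c] assms
    by (simp add: step_fun_eq n_def p_def abs_minus_commute)
  also have "\<dots> \<le> (\<Sum>m = n..<p. \<bar>c (Suc m) - c m\<bar>)"
    by (rule sum_abs)
  finally have "ennreal \<bar>step_fun c x - step_fun c (x + s)\<bar> \<le>
                (\<Sum>m = n..<p. ennreal \<bar>c (Suc m) - c m\<bar>)"
    by (simp add: ennreal_leI)
  also have "\<dots> =
      (\<Sum>m = n..<p. ennreal \<bar>c (Suc m) - c m\<bar> * indicator {real (Suc m) - s..<real (Suc m)} x)"
    using jump by (intro sum.cong) (simp_all del: of_nat_Suc)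
  also have "\<dots> \<le> (\<Sum>m. ennreal \<bar>c (Suc m) - c m\<bar> * indicator {real (Suc m) - s..<real (Suc m)} x)"
    by (rule sum_le_suminf) auto
  finally show ?thesis .
qed

lemma set_nn_integral_step_fun_translation_le:
  assumes "Q \<subseteq> {0..}" "0 \<le> s"
  shows "(\<integral>\<^sup>+x\<in>Q. \<bar>step_fun c x - step_fun c (x + s)\<bar> \<partial>lborel) \<le>
           ennreal s * (\<Sum>m. ennreal \<bar>c (Suc m) - c m\<bar>)"
proof -
  have "(\<integral>\<^sup>+x\<in>Q. \<bar>step_fun c x - step_fun c (x + s)\<bar> \<partial>lborel) \<le>
        (\<integral>\<^sup>+x. (\<Sum>m. ennreal \<bar>c (Suc m) - c m\<bar> * indicator {real (Suc m) - s..<real (Suc m)} x)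
          \<partial>lborel)"
    using assms step_fun_translation_jump_le
    by (intro nn_integral_mono) (auto simp: indicator_def simp del: of_nat_Suc)
  also have "\<dots> = (\<Sum>m. ennreal \<bar>c (Suc m) - c m\<bar> * ennreal s)"
    using assms(2) by (simp add: nn_integral_suminf nn_integral_cmult_indicator del: of_nat_Suc)
  also have "\<dots> = ennreal s * (\<Sum>m. ennreal \<bar>c (Suc m) - c m\<bar>)"
    by (simp add: mult.commute)
  finally show ?thesis .
qed

lemma measure_step_density_translation_le:
  assumes nonneg: "\<And>m. 0 \<le> c m" and total: "c sums 1"
    and "0 \<le> s" and Q: "Q \<in> sets borel" "Q \<subseteq> {0..}"
  shows "measure (step_density c) Q \<le> measure (step_density c) ((\<lambda>x. x + s) ` Q) + s * seq_variation c"
    and "measure (step_density c) ((\<lambda>x. x + s) ` Q) \<le> measure (step_density c) Q + s * seq_variation c"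
proof -
  interpret prob_space "step_density c"
    using nonneg total by (rule prob_space_step_density)
  have summable: "summable (\<lambda>m. \<bar>c m\<bar>)"
    using nonneg total by (simp add: sums_iff)
  have "(\<integral>\<^sup>+x\<in>Q. \<bar>step_fun c x - step_fun c (x + s)\<bar> \<partial>lborel) \<le> ennreal (s * seq_variation c)"
    using set_nn_integral_step_fun_translation_le[OF Q(2) \<open>0 \<le> s\<close>, of c] \<open>0 \<le> s\<close>
    by (simp add: suminf_ennreal_abs_diff_Suc[OF summable] ennreal_mult')
  with emeasure_density_translation_le[of "step_fun c" Q s, folded step_density_def]
  have "emeasure (step_density c) Q \<le>
          emeasure (step_density c) ((\<lambda>x. x + s) ` Q) + ennreal (s * seq_variation c)"
    "emeasure (step_density c) ((\<lambda>x. x + s) ` Q) \<le>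
          emeasure (step_density c) Q + ennreal (s * seq_variation c)"
    using Q(1) step_fun_nonneg[OF nonneg] by (auto intro: order.trans add_left_mono)
  moreover have "0 \<le> s * seq_variation c"
    using \<open>0 \<le> s\<close> seq_variation_nonneg[OF summable] by simp
  ultimately show "prob Q \<le> prob ((\<lambda>x. x + s) ` Q) + s * seq_variation c"
    "prob ((\<lambda>x. x + s) ` Q) \<le> prob Q + s * seq_variation c"
    by (simp_all add: emeasure_eq_measure ennreal_plus[symmetric] del: ennreal_plus)
qed

lemma TV_step_density_le:
  assumes "\<And>m. 0 \<le> c m" "c sums 1" "0 \<le> s"
  shows "TV (step_density c) s \<le> s * seq_variation c"
  unfolding TV_def
proof (rule cSUP_least)
  fix Q :: "real set" assume "Q \<in> {Q. Q \<in> sets borel \<and> Q \<subseteq> {0..}}"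
  then show "\<bar>measure (step_density c) Q - measure (step_density c) ((\<lambda>x. x + s) ` Q)\<bar> \<le>
      s * seq_variation c"
    using measure_step_density_translation_le[OF assms, of Q] by auto
qed auto

lemma sum_decrease_le_TV_step_density:
  assumes "\<And>m. 0 \<le> c m" "c sums 1"
  shows "(\<Sum>m<N. max 0 (c m - c (Suc m))) \<le> TV (step_density c) 1"
proof -
  define S where "S = {m \<in> {..<N}. c (Suc m) < c m}"
  define Q where "Q = (\<Union>m\<in>S. {real m..<real (Suc m)})"
  have "finite S"
    by (simp add: S_def)
  have Q: "Q \<in> sets borel" "Q \<subseteq> {0..}"
    using \<open>finite S\<close> by (auto simp: Q_def)
  have "(\<lambda>x. x + 1) ` Q = (\<Union>m\<in>Suc ` S. {real m..<real (Suc m)})"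
    by (simp add: Q_def image_UN add.commute)
  then have "measure (step_density c) ((\<lambda>x. x + 1) ` Q) = (\<Sum>m\<in>Suc ` S. c m)"
    using \<open>finite S\<close> assms(1) by (simp only: measure_step_density_UN_unit_intervals finite_imageI)
  also have "\<dots> = (\<Sum>m\<in>S. c (Suc m))"
    by (simp add: sum.reindex)
  finally have "measure (step_density c) ((\<lambda>x. x + 1) ` Q) = (\<Sum>m\<in>S. c (Suc m))" .
  moreover have "measure (step_density c) Q = (\<Sum>m\<in>S. c m)"
    using \<open>finite S\<close> assms(1) by (simp add: Q_def measure_step_density_UN_unit_intervals del: of_nat_Suc)
  moreover have "(\<Sum>m<N. max 0 (c m - c (Suc m))) = (\<Sum>m\<in>S. c m - c (Suc m))"
    unfolding S_def by (subst sum.inter_filter) (auto simp: max_def intro!: sum.cong)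
  ultimately have "(\<Sum>m<N. max 0 (c m - c (Suc m))) =
                   measure (step_density c) Q - measure (step_density c) ((\<lambda>x. x + 1) ` Q)"
    by (simp add: sum_subtractf)
  also have "\<dots> \<le> TV (step_density c) 1"
    using abs_measure_translation_diff_le_TV[OF prob_space_step_density[OF assms] Q, of 1] by linarith
  finally show ?thesis .
qed

lemma seq_variation_le_TV_step_density:
  assumes "\<And>m. 0 \<le> c m" "c sums 1"
  shows "seq_variation c \<le> 2 * TV (step_density c) 1"
proof -
  have summable: "summable (\<lambda>m. \<bar>c m\<bar>)"
    using assms by (simp add: sums_iff)
  have "summable (\<lambda>m. max 0 (c m - c (Suc m)))"
    using summable_abs_diff_Suc[OF summable] by (rule summable_comparison_test') auto
  then have "(\<Sum>m. max 0 (c m - c (Suc m))) \<le> TV (step_density c) 1"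
    using sum_decrease_le_TV_step_density[OF assms] by (rule suminf_le_const)
  then show ?thesis
    using seq_variation_eq_decrease[OF summable] assms(1)[of 0] by linarith
qed

theorem mainTheorem4:
  fixes \<xi> :: "nat \<Rightarrow> nat \<Rightarrow> real" and \<theta> :: "nat \<Rightarrow> real measure"
  assumes nonneg: "\<forall>k m. m \<ge> 1 \<longrightarrow> \<xi> k m \<ge> 0"
    and prob: "\<forall>k. (\<lambda>m. \<xi> k (Suc m)) sums 1"
    and dens: "\<forall>k. \<theta> k = density lborel
        (\<lambda>x. ennreal (\<Sum>m. \<xi> k (Suc m) * indicator {real m..<real (Suc m)} x))"
  shows "LTC \<theta> \<longleftrightarrow> (\<lambda>k. \<Sum>m. \<bar>\<xi> k (Suc (Suc m)) - \<xi> k (Suc m)\<bar>) \<longlonglongrightarrow> 0"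
proof -
  define c where "c k = (\<lambda>m. \<xi> k (Suc m))" for k
  have c: "\<And>m. 0 \<le> c k m" "c k sums 1" for k
    using nonneg prob by (simp_all add: c_def)
  have \<theta>: "\<theta> k = step_density (c k)" for k
    using dens by (simp add: step_density_def step_fun_def c_def)
  have "LTC \<theta> \<longleftrightarrow> (\<lambda>k. seq_variation (c k)) \<longlonglongrightarrow> 0"
    unfolding \<theta>
    by (rule LTC_iff_tendsto_zero[where C = 2])
       (simp_all add: c TV_nonneg TV_le_1 prob_space_step_density TV_step_density_le
         seq_variation_le_TV_step_density)
  then show ?thesis
    by (simp add: seq_variation_def c_def)
qed

end
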